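(* Let $T$ be a tree with $\mathrm{pthin}(T)=2$. Then there exists a simple path $C_0$ in $T$ such that every connected component of $T-V(C_0)$ has proper thinness equal to $1$.
   Context: For a graph $G=(V,E)$, a linear ordering $<$ of $V$ and a partition of $V$ into classes are called strongly consistent if for every triple $r<s<t$ of vertices with $rt\in E$: if $r$ and $s$ belong to the same class then $st\in E$, and if $s$ and $t$ belong to the same class then $rs\in E$. The proper thinness $\mathrm{pthin}(G)$ is the minimum $k$ such that some ordering of $V$ and some partition of $V$ into $k$ classes are strongly consistent. $T-X$ denotes the subgraph induced by $V(T)\setminus X$. *)

theory Defs
  imports Main
begin

definition graph :: "'a set \<Rightarrow> ('a \<Rightarrow> 'a \<Rightarrow> bool) \<Rightarrow> bool" where
  "graph V E \<longleftrightarrow> finite V \<and> (\<forall>x y. E x y \<longrightarrow> x \<in> V \<and> y \<in> V \<and> x \<noteq> y \<and> E y x)"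

definition induced :: "('a \<Rightarrow> 'a \<Rightarrow> bool) \<Rightarrow> 'a set \<Rightarrow> 'a \<Rightarrow> 'a \<Rightarrow> bool" where
  "induced E S = (\<lambda>x y. E x y \<and> x \<in> S \<and> y \<in> S)"

definition connected_graph :: "'a set \<Rightarrow> ('a \<Rightarrow> 'a \<Rightarrow> bool) \<Rightarrow> bool" where
  "connected_graph V E \<longleftrightarrow> V \<noteq> {} \<and> (\<forall>x\<in>V. \<forall>y\<in>V. E\<^sup>*\<^sup>* x y)"

definition simple_path :: "'a set \<Rightarrow> ('a \<Rightarrow> 'a \<Rightarrow> bool) \<Rightarrow> 'a list \<Rightarrow> bool" where
  "simple_path V E ps \<longleftrightarrow> ps \<noteq> [] \<and> distinct ps \<and> set ps \<subseteq> V \<and>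
     (\<forall>i. Suc i < length ps \<longrightarrow> E (ps ! i) (ps ! Suc i))"

definition has_cycle :: "'a set \<Rightarrow> ('a \<Rightarrow> 'a \<Rightarrow> bool) \<Rightarrow> bool" where
  "has_cycle V E \<longleftrightarrow> (\<exists>ps. simple_path V E ps \<and> length ps \<ge> 3 \<and> E (last ps) (hd ps))"

definition tree :: "'a set \<Rightarrow> ('a \<Rightarrow> 'a \<Rightarrow> bool) \<Rightarrow> bool" where
  "tree V E \<longleftrightarrow> graph V E \<and> connected_graph V E \<and> \<not> has_cycle V E"

text \<open>Strong consistency of an ordering (the list vs, r < s iff r occurs before s)
  and a class assignment c.\<close>
definition strongly_consistent ::
  "('a \<Rightarrow> 'a \<Rightarrow> bool) \<Rightarrow> 'a list \<Rightarrow> ('a \<Rightarrow> nat) \<Rightarrow> bool" where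
  "strongly_consistent E vs c \<longleftrightarrow>
     (\<forall>i j l. i < j \<and> j < l \<and> l < length vs \<and> E (vs ! i) (vs ! l) \<longrightarrow>
        (c (vs ! i) = c (vs ! j) \<longrightarrow> E (vs ! j) (vs ! l)) \<and>
        (c (vs ! j) = c (vs ! l) \<longrightarrow> E (vs ! i) (vs ! j)))"

text \<open>Proper thinness: least k such that some linear ordering of V and some partition
  of V into k (nonempty) classes, given by class labels 0..k-1, are strongly consistent.\<close>
definition pthin :: "'a set \<Rightarrow> ('a \<Rightarrow> 'a \<Rightarrow> bool) \<Rightarrow> nat" where
  "pthin V E = (LEAST k. \<exists>vs c. distinct vs \<and> set vs = V \<and> c ` V = {..<k} \<and>
                              strongly_consistent E vs c)"

definition components_minus ::
  "'a set \<Rightarrow> ('a \<Rightarrow> 'a \<Rightarrow> bool) \<Rightarrow> 'a set \<Rightarrow> 'a set set" where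
  "components_minus V E X =
     {{y. (induced E (V - X))\<^sup>*\<^sup>* x y} | x. x \<in> V - X}"

end

theory Submission
  imports Defs
begin

text \<open>Fix a strongly consistent ordering with two classes and a path \<open>P\<close> from the first to
  the last vertex of the ordering. Every vertex off \<open>P\<close> lies strictly between the ends of some
  edge of \<open>P\<close>. In a graph without cycles of length 3 or 4, two edges with distinct left and
  distinct right ends can never straddle a common vertex when only two classes are used. Hence
  no edge of \<open>T - V(P)\<close> straddles a vertex of \<open>T - V(P)\<close>, and on each component the
  restricted ordering is strongly consistent with a single class.\<close>

lemma graph_edgeD: "graph V E \<Longrightarrow> E x y \<Longrightarrow> x \<in> V \<and> y \<in> V \<and> x \<noteq> y \<and> E y x"
  unfolding graph_def by blast

lemma simple_path_singleton [simp]: "simple_path V E [x] \<longleftrightarrow> x \<in> V"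
  by (simp add: simple_path_def)

lemma simple_path_Cons:
  "simple_path V E (x # y # ps) \<longleftrightarrow>
     x \<in> V \<and> x \<notin> set (y # ps) \<and> E x y \<and> simple_path V E (y # ps)"
proof -
  have "(\<forall>i. Suc i < length (x # y # ps) \<longrightarrow> E ((x # y # ps) ! i) ((x # y # ps) ! Suc i))
        \<longleftrightarrow> E x y \<and> (\<forall>i. Suc i < length (y # ps) \<longrightarrow> E ((y # ps) ! i) ((y # ps) ! Suc i))"
    (is "(\<forall>i. ?P i) \<longleftrightarrow> _")
  proof
    assume "\<forall>i. ?P i"
    then show "E x y \<and> (\<forall>i. Suc i < length (y # ps) \<longrightarrow> E ((y # ps) ! i) ((y # ps) ! Suc i))"
      by (metis Suc_less_eq length_Cons nth_Cons_0 nth_Cons_Suc zero_less_Suc)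
  next
    assume "E x y \<and> (\<forall>i. Suc i < length (y # ps) \<longrightarrow> E ((y # ps) ! i) ((y # ps) ! Suc i))"
    then show "\<forall>i. ?P i" by (auto simp: nth_Cons split: nat.splits)
  qed
  then show ?thesis by (auto simp: simple_path_def)
qed

lemma simple_path_drop:
  assumes "simple_path V E ps" "k < length ps"
  shows "simple_path V E (drop k ps)"
  using assms by (auto simp: simple_path_def dest: in_set_dropD)

lemma rtranclp_simple_path:
  assumes "graph V E" "E\<^sup>*\<^sup>* x y" "y \<in> V"
  shows "\<exists>ps. simple_path V E ps \<and> hd ps = x \<and> last ps = y"
  using assms(2)
proof (induction rule: converse_rtranclp_induct)
  case base
  then show ?case using assms(3) by (intro exI[of _ "[y]"]) simp
next
  case (step x z)
  then obtain ps where ps: "simple_path V E ps" "hd ps = z" "last ps = y" by blast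
  then have "ps \<noteq> []" by (simp add: simple_path_def)
  show ?case
  proof (cases "x \<in> set ps")
    case True
    then obtain k where k: "k < length ps" "ps ! k = x" by (auto simp: in_set_conv_nth)
    then show ?thesis using ps simple_path_drop[OF ps(1) k(1)]
      by (intro exI[of _ "drop k ps"]) (simp add: hd_drop_conv_nth)
  next
    case False
    then have "simple_path V E (x # ps)"
      using ps \<open>ps \<noteq> []\<close> step(1) graph_edgeD[OF assms(1) step(1)]
      by (cases ps) (auto simp: simple_path_Cons)
    then show ?thesis using ps \<open>ps \<noteq> []\<close> by (intro exI[of _ "x # ps"]) simp
  qed
qed

lemma tree_triangle_free:
  assumes "tree V E" "distinct [x, y, z]" "E x y" "E y z" "E z x"
  shows False
proof -
  have "graph V E" using assms(1) by (simp add: tree_def)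
  then have "simple_path V E [x, y, z]"
    using assms(2-4) by (auto simp: simple_path_Cons dest: graph_edgeD)
  then have "has_cycle V E" using assms(5) unfolding has_cycle_def
    by (intro exI[of _ "[x, y, z]"]) simp
  then show False using assms(1) by (simp add: tree_def)
qed

lemma tree_square_free:
  assumes "tree V E" "distinct [x, y, z, w]" "E x y" "E y z" "E z w" "E w x"
  shows False
proof -
  have "graph V E" using assms(1) by (simp add: tree_def)
  then have "simple_path V E [x, y, z, w]"
    using assms(2-5) by (auto simp: simple_path_Cons dest: graph_edgeD)
  then have "has_cycle V E" using assms(6) unfolding has_cycle_def
    by (intro exI[of _ "[x, y, z, w]"]) simp
  then show False using assms(1) by (simp add: tree_def)
qed

lemma strongly_consistentD:
  assumes "strongly_consistent E vs c" "i < j" "j < l" "l < length vs" "E (vs ! i) (vs ! l)"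
  shows "(c (vs ! i) = c (vs ! j) \<longrightarrow> E (vs ! j) (vs ! l)) \<and>
         (c (vs ! j) = c (vs ! l) \<longrightarrow> E (vs ! i) (vs ! j))"
  using assms unfolding strongly_consistent_def by blast

locale girth_at_least_five =
  fixes E :: "'a \<Rightarrow> 'a \<Rightarrow> bool"
  assumes sym: "\<And>x y. E x y \<Longrightarrow> E y x"
    and triangle_free: "\<And>x y z. distinct [x, y, z] \<Longrightarrow> E x y \<Longrightarrow> E y z \<Longrightarrow> E z x \<Longrightarrow> False"
    and square_free:
      "\<And>x y z w. distinct [x, y, z, w] \<Longrightarrow> E x y \<Longrightarrow> E y z \<Longrightarrow> E z w \<Longrightarrow> E w x \<Longrightarrow> False"
begin

text \<open>The next two lemmas are finite checks over the \<open>2\<^sup>5\<close> assignments of two classes to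
  the vertices \<open>r < u < s < w < t\<close> (nested edges \<open>rt\<close>, \<open>uw\<close>) and \<open>r < u < s < t < w\<close>
  (crossing edges), using only the consistency conditions of the triples listed.\<close>

lemma two_classes_nested_edges:
  fixes c :: "'a \<Rightarrow> nat"
  assumes "distinct [r, t, u, w, s]" "\<forall>v \<in> {r, t, u, w, s}. c v < 2"
    and "E r t" "E u w"
    and rut: "(c r = c u \<longrightarrow> E u t) \<and> (c u = c t \<longrightarrow> E r u)"
    and rwt: "(c r = c w \<longrightarrow> E w t) \<and> (c w = c t \<longrightarrow> E r w)"
    and rst: "(c r = c s \<longrightarrow> E s t) \<and> (c s = c t \<longrightarrow> E r s)"
    and usw: "(c u = c s \<longrightarrow> E s w) \<and> (c s = c w \<longrightarrow> E u s)"
  shows False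
proof -
  have "\<not> (E u t \<and> E w t)" "\<not> (E r u \<and> E r w)" "\<not> (E r u \<and> E u t)" "\<not> (E r s \<and> E s t)"
    "\<not> (E u s \<and> E s w)" "\<not> (E r w \<and> E w t)"
    using triangle_free[of u w t] triangle_free[of u w r] triangle_free[of r u t]
      triangle_free[of r s t] triangle_free[of u s w] triangle_free[of r w t] assms(1,3,4) sym
    by auto
  moreover have "\<not> (E u t \<and> E r w)" "\<not> (E r u \<and> E w t)"
    using square_free[of u t r w] square_free[of u r t w] assms(1,3,4) sym by auto
  moreover have "c v = 0 \<or> c v = 1" if "v \<in> {r, t, u, w, s}" for v
    using assms(2) that by fastforce
  ultimately show False using rut rwt rst usw by (smt (verit) insert_iff)
qed

lemma two_classes_crossing_edges:
  fixes c :: "'a \<Rightarrow> nat"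
  assumes "distinct [r, t, u, w, s]" "\<forall>v \<in> {r, t, u, w, s}. c v < 2"
    and "E r t" "E u w"
    and rut: "(c r = c u \<longrightarrow> E u t) \<and> (c u = c t \<longrightarrow> E r u)"
    and rst: "(c r = c s \<longrightarrow> E s t) \<and> (c s = c t \<longrightarrow> E r s)"
    and usw: "(c u = c s \<longrightarrow> E s w) \<and> (c s = c w \<longrightarrow> E u s)"
    and utw: "(c u = c t \<longrightarrow> E t w) \<and> (c t = c w \<longrightarrow> E u t)"
    and ust: "E u t \<longrightarrow> (c u = c s \<longrightarrow> E s t) \<and> (c s = c t \<longrightarrow> E u s)"
  shows False
proof -
  have "\<not> (E s w \<and> E u s)" "\<not> (E r s \<and> E s t)" "\<not> (E u t \<and> E r u)" "\<not> (E u t \<and> E t w)"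
    using triangle_free[of s w u] triangle_free[of r s t] triangle_free[of r u t]
      triangle_free[of u t w] assms(1,3,4) sym
    by auto
  moreover have "\<not> (E r u \<and> E t w)" "\<not> (E s w \<and> E s t \<and> E u t)" "\<not> (E r s \<and> E u s \<and> E u t)"
    using square_free[of r u w t] square_free[of s t u w] square_free[of s u t r]
      assms(1,3,4) sym by auto
  moreover have "c v = 0 \<or> c v = 1" if "v \<in> {r, t, u, w, s}" for v
    using assms(2) that by fastforce
  ultimately show False using rut rst usw utw ust by (smt (verit) insert_iff)
qed

lemma two_classes_no_common_span:
  fixes c :: "'a \<Rightarrow> nat"
  assumes sc: "strongly_consistent E vs c" and "distinct vs" and "\<forall>v \<in> set vs. c v < 2"
    and "a < s" "s < b" "b < length vs" "E (vs ! a) (vs ! b)"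
    and "d < s" "s < e" "e < length vs" "E (vs ! d) (vs ! e)"
    and "a \<noteq> d" "b \<noteq> e"
  shows False
proof -
  let ?v = "(!) vs"
  have False
    if ad: "a < d" and spans: "a < s" "s < b" "b < length vs" "d < s" "s < e" "e < length vs"
      and edges: "E (?v a) (?v b)" "E (?v d) (?v e)" and "b \<noteq> e"
    for a b d e
  proof -
    have distinct5: "distinct [?v a, ?v b, ?v d, ?v e, ?v s]"
      using assms(2) ad spans \<open>b \<noteq> e\<close> by (auto simp: nth_eq_iff_index_eq)
    have classes: "\<forall>v \<in> {?v a, ?v b, ?v d, ?v e, ?v s}. c v < 2"
      using assms(3) ad spans by auto
    have adb: "(c (?v a) = c (?v d) \<longrightarrow> E (?v d) (?v b)) \<and> (c (?v d) = c (?v b) \<longrightarrow> E (?v a) (?v d))"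
      and asb: "(c (?v a) = c (?v s) \<longrightarrow> E (?v s) (?v b)) \<and> (c (?v s) = c (?v b) \<longrightarrow> E (?v a) (?v s))"
      and dse: "(c (?v d) = c (?v s) \<longrightarrow> E (?v s) (?v e)) \<and> (c (?v s) = c (?v e) \<longrightarrow> E (?v d) (?v s))"
      using strongly_consistentD[OF sc, of a d b] strongly_consistentD[OF sc, of a s b]
        strongly_consistentD[OF sc, of d s e] ad spans edges by auto
    show False
    proof (cases "e < b")
      case True
      have "(c (?v a) = c (?v e) \<longrightarrow> E (?v e) (?v b)) \<and> (c (?v e) = c (?v b) \<longrightarrow> E (?v a) (?v e))"
        using strongly_consistentD[OF sc, of a e b] ad spans edges True by auto
      then show False
        using two_classes_nested_edges[OF distinct5 classes edges] adb asb dse by blast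
    next
      case False
      then have "b < e" using \<open>b \<noteq> e\<close> by simp
      have "(c (?v d) = c (?v b) \<longrightarrow> E (?v b) (?v e)) \<and> (c (?v b) = c (?v e) \<longrightarrow> E (?v d) (?v b))"
        and "E (?v d) (?v b) \<longrightarrow>
          (c (?v d) = c (?v s) \<longrightarrow> E (?v s) (?v b)) \<and> (c (?v s) = c (?v b) \<longrightarrow> E (?v d) (?v s))"
        using strongly_consistentD[OF sc, of d b e] strongly_consistentD[OF sc, of d s b]
          ad spans edges \<open>b < e\<close> by auto
      then show False
        using two_classes_crossing_edges[OF distinct5 classes edges] adb asb dse by blast
    qed
  qed
  then show False using assms(4-) by (metis linorder_neqE_nat)
qed

end

definition index :: "'a list \<Rightarrow> 'a \<Rightarrow> nat" where
  "index xs v = (THE i. i < length xs \<and> xs ! i = v)"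

lemma index_nth: "distinct xs \<Longrightarrow> i < length xs \<Longrightarrow> index xs (xs ! i) = i"
  unfolding index_def by (rule the_equality) (auto simp: nth_eq_iff_index_eq)

lemma index_less_length_nth_index:
  assumes "distinct xs" "v \<in> set xs"
  shows "index xs v < length xs \<and> xs ! index xs v = v"
proof -
  obtain i where "i < length xs" "xs ! i = v" using assms(2) by (auto simp: in_set_conv_nth)
  then show ?thesis using index_nth[OF assms(1)] by auto
qed

lemma sorted_wrt_index: "distinct xs \<Longrightarrow> sorted_wrt (\<lambda>x y. index xs x < index xs y) xs"
  by (simp add: sorted_wrt_iff_nth_less index_nth)

lemma exists_step_across:
  fixes g :: "nat \<Rightarrow> 'b::linorder"
  assumes "g 0 < x" "x \<le> g m"
  shows "\<exists>k<m. g k < x \<and> x \<le> g (Suc k)"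
  using assms(2)
proof (induction m)
  case 0
  then show ?case using assms(1) by simp
next
  case (Suc m)
  then show ?case by (metis less_Suc_eq not_le)
qed

lemma simple_path_spans_position:
  assumes P: "simple_path V E P" "set P \<subseteq> set vs" "hd P = vs ! 0" "last P = vs ! (length vs - 1)"
    and "distinct vs" "j < length vs" "vs ! j \<notin> set P"
  shows "\<exists>a b. a < j \<and> j < b \<and> b < length vs \<and> E (vs ! a) (vs ! b) \<and>
           vs ! a \<in> set P \<and> vs ! b \<in> set P"
proof -
  define g where "g k = index vs (P ! k)" for k
  have "P \<noteq> []" and edges: "\<And>k. Suc k < length P \<Longrightarrow> E (P ! k) (P ! Suc k)"
    using P(1) by (auto simp: simple_path_def)
  have g_nth: "g k < length vs \<and> vs ! g k = P ! k" if "k < length P" for k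
    using index_less_length_nth_index[OF assms(5), of "P ! k"] P(2) nth_mem[OF that]
    by (auto simp: g_def)
  have "vs \<noteq> []" using assms(6) by auto
  have "g 0 = 0"
    using P(3) \<open>P \<noteq> []\<close> \<open>vs \<noteq> []\<close> index_nth[OF assms(5), of 0] by (simp add: g_def hd_conv_nth)
  moreover have "j \<noteq> 0" using P(3) \<open>P \<noteq> []\<close> assms(7) by (metis hd_in_set)
  moreover have "g (length P - 1) = length vs - 1"
    using P(4) \<open>P \<noteq> []\<close> \<open>vs \<noteq> []\<close> index_nth[OF assms(5), of "length vs - 1"]
    by (simp add: g_def last_conv_nth)
  ultimately have "g 0 < j" "j \<le> g (length P - 1)" using assms(6) by auto
  then obtain k where k: "k < length P - 1" "g k < j" "j \<le> g (Suc k)"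
    using exists_step_across by blast
  have "g (Suc k) \<noteq> j" using g_nth[of "Suc k"] k(1) assms(7) by force
  then show ?thesis
    using k g_nth[of k] g_nth[of "Suc k"] edges[of k]
    by (intro exI[of _ "g k"] exI[of _ "g (Suc k)"]) auto
qed

lemma tree_two_classes_off_path_no_span:
  assumes "tree V E" "strongly_consistent E vs c" "distinct vs" "set vs = V" "c ` V \<subseteq> {..<2}"
    and P: "simple_path V E P" "hd P = vs ! 0" "last P = vs ! (length vs - 1)"
    and "i < j" "j < l" "l < length vs"
    and "vs ! i \<notin> set P" "vs ! j \<notin> set P" "vs ! l \<notin> set P"
  shows "\<not> E (vs ! i) (vs ! l)"
proof
  assume "E (vs ! i) (vs ! l)"
  have "set P \<subseteq> set vs" using P(1) assms(4) by (simp add: simple_path_def)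
  moreover have "j < length vs" using assms(10,11) by simp
  ultimately obtain a b where ab: "a < j" "j < b" "b < length vs" "E (vs ! a) (vs ! b)"
    "vs ! a \<in> set P" "vs ! b \<in> set P"
    using simple_path_spans_position[OF P(1) _ P(2,3) assms(3) _ assms(13)] by blast
  have "graph V E" using assms(1) by (simp add: tree_def)
  interpret girth_at_least_five E
    using graph_edgeD[OF \<open>graph V E\<close>] tree_triangle_free[OF assms(1)]
      tree_square_free[OF assms(1)]
    by unfold_locales blast+
  have "\<forall>v \<in> set vs. c v < 2" using assms(4,5) by auto
  moreover have "a \<noteq> i" "b \<noteq> l" using ab(5,6) assms(12,14) by auto
  ultimately show False
    using two_classes_no_common_span[OF assms(2,3) _ ab(1-4) assms(9-11) \<open>E (vs ! i) (vs ! l)\<close>]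
    by blast
qed

lemma strongly_consistent_filter_const:
  assumes "distinct vs"
    and no_span: "\<And>i j l. i < j \<Longrightarrow> j < l \<Longrightarrow> l < length vs \<Longrightarrow>
      P (vs ! i) \<Longrightarrow> P (vs ! j) \<Longrightarrow> P (vs ! l) \<Longrightarrow> \<not> E (vs ! i) (vs ! l)"
  shows "strongly_consistent E (filter P vs) (\<lambda>_. k)"
  unfolding strongly_consistent_def
proof (intro allI impI)
  fix i j l
  let ?ws = "filter P vs" and ?pos = "index vs"
  assume "i < j \<and> j < l \<and> l < length ?ws \<and> E (?ws ! i) (?ws ! l)"
  then have ijl: "i < j" "j < l" "l < length ?ws" and edge: "E (?ws ! i) (?ws ! l)" by auto
  have increasing: "?pos (?ws ! p) < ?pos (?ws ! q)" if "p < q" "q < length ?ws" for p q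
    using sorted_wrt_filter[OF sorted_wrt_index[OF assms(1)], of P] that
    by (simp add: sorted_wrt_iff_nth_less)
  have at_pos: "?pos (?ws ! p) < length vs \<and> vs ! ?pos (?ws ! p) = ?ws ! p \<and> P (?ws ! p)"
    if "p < length ?ws" for p
    using index_less_length_nth_index[OF assms(1), of "?ws ! p"] nth_mem[OF that] by auto
  have "\<not> E (?ws ! i) (?ws ! l)"
    using no_span[of "?pos (?ws ! i)" "?pos (?ws ! j)" "?pos (?ws ! l)"]
      increasing[of i j] increasing[of j l] at_pos[of i] at_pos[of j] at_pos[of l] ijl
    by auto
  then show "((\<lambda>_. k) (?ws ! i) = (\<lambda>_. k) (?ws ! j) \<longrightarrow> E (?ws ! j) (?ws ! l)) \<and>
      ((\<lambda>_. k) (?ws ! j) = (\<lambda>_. k) (?ws ! l) \<longrightarrow> E (?ws ! i) (?ws ! j))"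
    using edge by blast
qed

lemma pthin_attained:
  assumes "finite V"
  shows "\<exists>vs c. distinct vs \<and> set vs = V \<and> c ` V = {..<pthin V E} \<and> strongly_consistent E vs c"
proof -
  let ?P = "\<lambda>k. \<exists>vs c. distinct vs \<and> set vs = V \<and> c ` V = {..<k} \<and> strongly_consistent E vs c"
  obtain vs where vs: "set vs = V" "distinct vs" using finite_distinct_list[OF assms] by blast
  have "index vs ` V = {..<length vs}"
    using vs index_less_length_nth_index[OF vs(2)] index_nth[OF vs(2)]
    by (force simp: in_set_conv_nth image_iff)
  moreover have "strongly_consistent E vs (index vs)"
    unfolding strongly_consistent_def using index_nth[OF vs(2)] by auto
  ultimately have "?P (length vs)" using vs by blast
  then show ?thesis unfolding pthin_def by (rule LeastI)
qed

lemma pthin_eq_1I: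
  assumes "V \<noteq> {}" "distinct vs" "set vs = V" "strongly_consistent E vs (\<lambda>_. 0)"
  shows "pthin V E = 1"
  unfolding pthin_def
proof (rule Least_equality)
  have "(\<lambda>_. 0::nat) ` V = {..<1}" using assms(1) by auto
  then show "\<exists>vs c. distinct vs \<and> set vs = V \<and> c ` V = {..<1} \<and> strongly_consistent E vs c"
    using assms(2-4) by blast
next
  fix k assume "\<exists>vs c. distinct vs \<and> set vs = V \<and> c ` V = {..<k} \<and> strongly_consistent E vs c"
  then show "1 \<le> k" using assms(1) by (cases k) auto
qed

lemma induced_rtranclp_mem: "(induced E S)\<^sup>*\<^sup>* x y \<Longrightarrow> x \<in> S \<Longrightarrow> y \<in> S"
  by (induction rule: rtranclp_induct) (auto simp: induced_def)

lemma components_minus_subset: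
  assumes "C \<in> components_minus V E X"
  shows "C \<noteq> {} \<and> C \<subseteq> V - X"
  using assms induced_rtranclp_mem[of E "V - X"] unfolding components_minus_def by blast

theorem corollary3:
  fixes V :: "'a set" and E :: "'a \<Rightarrow> 'a \<Rightarrow> bool"
  assumes "tree V E" and "pthin V E = 2"
  shows "\<exists>C0. simple_path V E C0 \<and>
           (\<forall>C \<in> components_minus V E (set C0). pthin C (induced E C) = 1)"
proof -
  have "graph V E" "connected_graph V E" using assms(1) by (auto simp: tree_def)
  then obtain vs c where vs: "distinct vs" "set vs = V" "c ` V = {..<2}"
    and sc: "strongly_consistent E vs c"
    using pthin_attained[of V E] assms(2) by (auto simp: graph_def)
  have "vs \<noteq> []" using vs(2) \<open>connected_graph V E\<close> by (auto simp: connected_graph_def)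
  then have ends: "vs ! 0 \<in> V" "vs ! (length vs - 1) \<in> V" using vs(2) by auto
  then obtain P where P: "simple_path V E P" "hd P = vs ! 0" "last P = vs ! (length vs - 1)"
    using rtranclp_simple_path[OF \<open>graph V E\<close>] \<open>connected_graph V E\<close>
    by (metis connected_graph_def)
  have "pthin C (induced E C) = 1" if "C \<in> components_minus V E (set P)" for C
  proof -
    have C: "C \<noteq> {}" "C \<subseteq> V - set P" using components_minus_subset[OF that] by auto
    have "\<not> E (vs ! i) (vs ! l)"
      if "i < j" "j < l" "l < length vs" "vs ! i \<in> C" "vs ! j \<in> C" "vs ! l \<in> C" for i j l
      using tree_two_classes_off_path_no_span[OF assms(1) sc vs(1,2) _ P that(1-3)] vs(3) C(2) that(4-)
      by blast
    then have "strongly_consistent (induced E C) (filter (\<lambda>v. v \<in> C) vs) (\<lambda>_. 0)"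
      by (intro strongly_consistent_filter_const[OF vs(1)]) (auto simp: induced_def)
    moreover have "set (filter (\<lambda>v. v \<in> C) vs) = C" using C(2) vs(2) by auto
    ultimately show ?thesis using pthin_eq_1I C(1) vs(1) by (metis distinct_filter)
  qed
  then show ?thesis using P(1) by blast
qed

end
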